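(* Let $\Sigma$ be a finite alphabet and let $p:\mathcal{Q}\to\mathcal{F}(B_\Sigma)$ be a functor of categories. Then $p$ is ULF and finitary if and only if $p$ is (up to isomorphism of categories over $\mathcal{F}(B_\Sigma)$) the functor associated to a bare nondeterministic finite-state automaton over $\Sigma$; that is, iff there exist finite sets $Q$ and $T$ and a function $\delta:T\to Q\times\Sigma\times Q$, and an isomorphism between $\mathcal{Q}$ and the free category on the graph with nodes $Q$ and an edge $t:q\to q'$ for each $t\in T$ with $\delta(t)=(q,a,q')$, under which $p$ corresponds to the functor sending each such edge $t$ to the letter $a$.
   Context: $B_\Sigma$ is the bouquet graph with one node $*$ and one loop $a:*\to *$ for each $a\in\Sigma$; its free category $\mathcal{F}(B_\Sigma)$ has one object, whose arrows are the words over $\Sigma$ with composition given by concatenation. The free category on a graph has the nodes as objects and finite paths as arrows. Composition is written diagrammatically. A functor $p:\mathcal{D}\to\mathcal{C}$ is ULF if for every arrow $\alpha$ of $\mathcal{D}$ and arrows $u,v$ of $\mathcal{C}$ with $p(\alpha)=uv$ there is a unique pair of arrows $\beta,\gamma$ of $\mathcal{D}$ with $\alpha=\beta\gamma$, $p(\beta)=u$, $p(\gamma)=v$. It is finitary if the fibers $p^{-1}(A)$ (objects over $A$) and $p^{-1}(w)$ (arrows over $w$) are finite for every object $A$ and arrow $w$ of $\mathcal{C}$. *)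

theory Defs
  imports Main
begin

text \<open>Small categories given by carriers; composition is diagrammatic:
  Comp C f g is "first f, then g", defined when Cod f = Dom g.\<close>

record ('o, 'm) cat =
  Obj  :: "'o set"
  Arr  :: "'m set"
  Dom  :: "'m \<Rightarrow> 'o"
  Cod  :: "'m \<Rightarrow> 'o"
  Id   :: "'o \<Rightarrow> 'm"
  Comp :: "'m \<Rightarrow> 'm \<Rightarrow> 'm"

definition is_category :: "('o, 'm) cat \<Rightarrow> bool" where
  "is_category C \<longleftrightarrow>
     (\<forall>f\<in>Arr C. Dom C f \<in> Obj C \<and> Cod C f \<in> Obj C) \<and>
     (\<forall>x\<in>Obj C. Id C x \<in> Arr C \<and> Dom C (Id C x) = x \<and> Cod C (Id C x) = x) \<and>
     (\<forall>f\<in>Arr C. \<forall>g\<in>Arr C. Cod C f = Dom C g \<longrightarrow>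
        Comp C f g \<in> Arr C \<and> Dom C (Comp C f g) = Dom C f \<and> Cod C (Comp C f g) = Cod C g) \<and>
     (\<forall>f\<in>Arr C. Comp C (Id C (Dom C f)) f = f \<and> Comp C f (Id C (Cod C f)) = f) \<and>
     (\<forall>f\<in>Arr C. \<forall>g\<in>Arr C. \<forall>h\<in>Arr C. Cod C f = Dom C g \<longrightarrow> Cod C g = Dom C h \<longrightarrow>
        Comp C (Comp C f g) h = Comp C f (Comp C g h))"

definition is_functor ::
  "('o, 'm) cat \<Rightarrow> ('p, 'n) cat \<Rightarrow> ('o \<Rightarrow> 'p) \<Rightarrow> ('m \<Rightarrow> 'n) \<Rightarrow> bool" where
  "is_functor C D Fo Fm \<longleftrightarrow>
     (\<forall>x\<in>Obj C. Fo x \<in> Obj D) \<and>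
     (\<forall>f\<in>Arr C. Fm f \<in> Arr D \<and> Dom D (Fm f) = Fo (Dom C f) \<and> Cod D (Fm f) = Fo (Cod C f)) \<and>
     (\<forall>x\<in>Obj C. Fm (Id C x) = Id D (Fo x)) \<and>
     (\<forall>f\<in>Arr C. \<forall>g\<in>Arr C. Cod C f = Dom C g \<longrightarrow> Fm (Comp C f g) = Comp D (Fm f) (Fm g))"

definition is_cat_iso ::
  "('o, 'm) cat \<Rightarrow> ('p, 'n) cat \<Rightarrow> ('o \<Rightarrow> 'p) \<Rightarrow> ('m \<Rightarrow> 'n) \<Rightarrow> bool" where
  "is_cat_iso C D Fo Fm \<longleftrightarrow> is_functor C D Fo Fm \<and>
     (\<exists>Go Gm. is_functor D C Go Gm \<and>
        (\<forall>x\<in>Obj C. Go (Fo x) = x) \<and> (\<forall>y\<in>Obj D. Fo (Go y) = y) \<and>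
        (\<forall>f\<in>Arr C. Gm (Fm f) = f) \<and> (\<forall>g\<in>Arr D. Fm (Gm g) = g))"

definition is_ULF ::
  "('o, 'm) cat \<Rightarrow> ('p, 'n) cat \<Rightarrow> ('o \<Rightarrow> 'p) \<Rightarrow> ('m \<Rightarrow> 'n) \<Rightarrow> bool" where
  "is_ULF D C Po Pm \<longleftrightarrow>
     (\<forall>\<alpha>\<in>Arr D. \<forall>u\<in>Arr C. \<forall>v\<in>Arr C. Cod C u = Dom C v \<longrightarrow> Pm \<alpha> = Comp C u v \<longrightarrow>
        (\<exists>!(\<beta>, \<gamma>). \<beta> \<in> Arr D \<and> \<gamma> \<in> Arr D \<and> Cod D \<beta> = Dom D \<gamma> \<and>
             \<alpha> = Comp D \<beta> \<gamma> \<and> Pm \<beta> = u \<and> Pm \<gamma> = v))"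

definition is_finitary ::
  "('o, 'm) cat \<Rightarrow> ('p, 'n) cat \<Rightarrow> ('o \<Rightarrow> 'p) \<Rightarrow> ('m \<Rightarrow> 'n) \<Rightarrow> bool" where
  "is_finitary D C Po Pm \<longleftrightarrow>
     (\<forall>A\<in>Obj C. finite {X \<in> Obj D. Po X = A}) \<and>
     (\<forall>w\<in>Arr C. finite {\<alpha> \<in> Arr D. Pm \<alpha> = w})"

text \<open>Free category on a graph (nodes N, edges E, source/target maps).
  An arrow is a finite path, represented as (start node, list of edges).\<close>

fun path_ok :: "'e set \<Rightarrow> ('e \<Rightarrow> 'n) \<Rightarrow> ('e \<Rightarrow> 'n) \<Rightarrow> 'n \<Rightarrow> 'e list \<Rightarrow> bool" where
  "path_ok E s t q [] = True"
| "path_ok E s t q (e # es) = (e \<in> E \<and> s e = q \<and> path_ok E s t (t e) es)"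

fun path_end :: "('e \<Rightarrow> 'n) \<Rightarrow> 'n \<Rightarrow> 'e list \<Rightarrow> 'n" where
  "path_end t q [] = q"
| "path_end t q (e # es) = path_end t (t e) es"

definition free_cat ::
  "'n set \<Rightarrow> 'e set \<Rightarrow> ('e \<Rightarrow> 'n) \<Rightarrow> ('e \<Rightarrow> 'n) \<Rightarrow> ('n, 'n \<times> 'e list) cat" where
  "free_cat N E s t =
     \<lparr> Obj = N,
       Arr = {(q, es). q \<in> N \<and> path_ok E s t q es},
       Dom = (\<lambda>(q, es). q),
       Cod = (\<lambda>(q, es). path_end t q es),
       Id = (\<lambda>q. (q, [])),
       Comp = (\<lambda>(q, es) (q', es'). (q, es @ es')) \<rparr>"

text \<open>Free category on the bouquet graph B_Sigma: one node, one loop per letter.\<close>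
definition FB :: "'c set \<Rightarrow> (unit, unit \<times> 'c list) cat" where
  "FB \<Sigma> = free_cat {()} \<Sigma> (\<lambda>_. ()) (\<lambda>_. ())"

definition nfa_src :: "('t \<Rightarrow> 'q \<times> 'c \<times> 'q) \<Rightarrow> 't \<Rightarrow> 'q" where
  "nfa_src \<delta> t = fst (\<delta> t)"
definition nfa_lbl :: "('t \<Rightarrow> 'q \<times> 'c \<times> 'q) \<Rightarrow> 't \<Rightarrow> 'c" where
  "nfa_lbl \<delta> t = fst (snd (\<delta> t))"
definition nfa_tgt :: "('t \<Rightarrow> 'q \<times> 'c \<times> 'q) \<Rightarrow> 't \<Rightarrow> 'q" where
  "nfa_tgt \<delta> t = snd (snd (\<delta> t))"

definition nfa_cat :: "'q set \<Rightarrow> 't set \<Rightarrow> ('t \<Rightarrow> 'q \<times> 'c \<times> 'q) \<Rightarrow> ('q, 'q \<times> 't list) cat" where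
  "nfa_cat Q T \<delta> = free_cat Q T (nfa_src \<delta>) (nfa_tgt \<delta>)"

definition nfa_functor_arr :: "('t \<Rightarrow> 'q \<times> 'c \<times> 'q) \<Rightarrow> 'q \<times> 't list \<Rightarrow> unit \<times> 'c list" where
  "nfa_functor_arr \<delta> = (\<lambda>(q, ts). ((), map (nfa_lbl \<delta>) ts))"

end

theory Submission
  imports Defs
begin

text \<open>
  If \<open>p\<close> is ULF, every arrow factors uniquely into atoms, the arrows mapped to single
  letters: existence by induction on the length of the image word, uniqueness because ULF splits
  an arrow uniquely along any splitting of its word. Hence the category is the free category on
  the graph of objects and atoms, labelled by their letters, and finitariness makes this graph
  finite, i.e. an automaton. Conversely, a path of an automaton splits uniquely at each position
  and there are finitely many paths of each length; both properties transfer along isomorphisms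
  that commute with the projections.
\<close>

lemma ex1_pairE:
  assumes "\<exists>!(x, y). P x y"
  obtains x y where "P x y" and "\<And>x' y'. P x' y' \<Longrightarrow> x' = x \<and> y' = y"
proof -
  from assms obtain p where p: "case p of (x, y) \<Rightarrow> P x y"
    and uniq: "\<And>q. (case q of (x, y) \<Rightarrow> P x y) \<Longrightarrow> q = p"
    by (elim ex1E) blast
  obtain x y where xy: "p = (x, y)"
    by fastforce
  have "P x y"
    using p xy by simp
  moreover have "x' = x \<and> y' = y" if "P x' y'" for x' y'
    using uniq[of "(x', y')"] that xy by simp
  ultimately show thesis
    by (rule that)
qed

lemma ex1_pairI:
  assumes "P x y" and "\<And>x' y'. P x' y' \<Longrightarrow> x' = x \<and> y' = y"
  shows "\<exists>!(x, y). P x y"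
proof (rule ex1I[of _ "(x, y)"])
  fix p :: "'a \<times> 'b"
  assume p: "case p of (x', y') \<Rightarrow> P x' y'"
  obtain x' y' where xy: "p = (x', y')"
    by fastforce
  with p have "P x' y'"
    by simp
  with assms(2) xy show "p = (x, y)"
    by blast
qed (simp add: assms(1))

section \<open>Free categories\<close>

lemma path_ok_append:
  "path_ok E s t q (xs @ ys) \<longleftrightarrow> path_ok E s t q xs \<and> path_ok E s t (path_end t q xs) ys"
  by (induction xs arbitrary: q) auto

lemma path_end_append: "path_end t q (xs @ ys) = path_end t (path_end t q xs) ys"
  by (induction xs arbitrary: q) auto

lemma path_ok_set: "path_ok E s t q xs \<Longrightarrow> set xs \<subseteq> E"
  by (induction xs arbitrary: q) auto

lemma path_end_in:
  "path_ok E s t q xs \<Longrightarrow> q \<in> N \<Longrightarrow> \<forall>e\<in>E. t e \<in> N \<Longrightarrow> path_end t q xs \<in> N"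
  by (induction xs arbitrary: q) auto

lemma free_cat_simps:
  "Obj (free_cat N E s t) = N"
  "Dom (free_cat N E s t) (q, es) = q"
  "Cod (free_cat N E s t) (q, es) = path_end t q es"
  "Id (free_cat N E s t) q = (q, [])"
  "Comp (free_cat N E s t) (q, es) (q', es') = (q, es @ es')"
  by (simp_all add: free_cat_def)

lemma free_cat_Arr: "(q, es) \<in> Arr (free_cat N E s t) \<longleftrightarrow> q \<in> N \<and> path_ok E s t q es"
  by (simp add: free_cat_def)

lemma free_cat_is_category:
  assumes "\<forall>e\<in>E. s e \<in> N \<and> t e \<in> N"
  shows "is_category (free_cat N E s t)"
  using assms unfolding is_category_def free_cat_def
  by (auto simp: path_ok_append path_end_append intro: path_end_in)

lemma free_cat_factor_iff:
  assumes "\<forall>e\<in>E. t e \<in> N"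
  shows "b \<in> Arr (free_cat N E s t) \<and> c \<in> Arr (free_cat N E s t) \<and>
      Cod (free_cat N E s t) b = Dom (free_cat N E s t) c \<and> (q, es) = Comp (free_cat N E s t) b c
    \<longleftrightarrow> (q, es) \<in> Arr (free_cat N E s t) \<and>
      (\<exists>xs ys. es = xs @ ys \<and> b = (q, xs) \<and> c = (path_end t q xs, ys))"
  using assms
  by (cases b, cases c) (fastforce simp: free_cat_simps free_cat_Arr path_ok_append intro: path_end_in)

lemma FB_Arr: "((), w) \<in> Arr (FB \<Sigma>) \<longleftrightarrow> set w \<subseteq> \<Sigma>"
proof -
  have "path_ok \<Sigma> (\<lambda>_. ()) (\<lambda>_. ()) () w \<longleftrightarrow> set w \<subseteq> \<Sigma>"
    by (induction w) auto
  then show ?thesis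
    by (simp add: FB_def free_cat_Arr)
qed

lemma FB_simps:
  "Obj (FB \<Sigma>) = {()}" "Dom (FB \<Sigma>) u = ()" "Cod (FB \<Sigma>) u = ()" "Id (FB \<Sigma>) x = ((), [])"
  "Comp (FB \<Sigma>) u v = ((), snd u @ snd v)"
  by (auto simp: FB_def free_cat_def split: prod.splits)

definition free_cat_map :: "('n \<Rightarrow> 'p) \<Rightarrow> ('e \<Rightarrow> 'f) \<Rightarrow> 'n \<times> 'e list \<Rightarrow> 'p \<times> 'f list" where
  "free_cat_map go ge = (\<lambda>(q, es). (go q, map ge es))"

context
  fixes N' :: "'n set" and E' :: "'e set" and s' t' :: "'e \<Rightarrow> 'n"
    and N :: "'p set" and E :: "'f set" and s t :: "'f \<Rightarrow> 'p"
    and go :: "'n \<Rightarrow> 'p" and ge :: "'e \<Rightarrow> 'f"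
  assumes graph: "\<forall>e\<in>E'. s' e \<in> N' \<and> t' e \<in> N'"
    and bij_nodes: "bij_betw go N' N" and bij_edges: "bij_betw ge E' E"
    and src: "\<forall>e\<in>E'. s (ge e) = go (s' e)" and tgt: "\<forall>e\<in>E'. t (ge e) = go (t' e)"
begin

lemma path_ok_map_iff:
  assumes "q \<in> N'" and "set es \<subseteq> E'"
  shows "path_ok E s t (go q) (map ge es) \<longleftrightarrow> path_ok E' s' t' q es"
  using assms
proof (induction es arbitrary: q)
  case (Cons e es)
  have "s' e \<in> N'" "t' e \<in> N'" "ge e \<in> E"
    using graph bij_edges Cons.prems by (auto simp: bij_betw_def)
  moreover have "go (s' e) = go q \<longleftrightarrow> s' e = q"
    using bij_nodes Cons.prems \<open>s' e \<in> N'\<close> by (auto simp: bij_betw_def inj_on_eq_iff)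
  ultimately show ?case
    using Cons src tgt by auto
qed simp

lemma path_ok_map: "q \<in> N' \<Longrightarrow> path_ok E' s' t' q es \<Longrightarrow> path_ok E s t (go q) (map ge es)"
  by (simp add: path_ok_map_iff path_ok_set)

lemma path_end_map: "set es \<subseteq> E' \<Longrightarrow> path_end t (go q) (map ge es) = go (path_end t' q es)"
  using tgt by (induction es arbitrary: q) auto

lemma free_cat_map_is_functor:
  "is_functor (free_cat N' E' s' t') (free_cat N E s t) go (free_cat_map go ge)"
  unfolding is_functor_def
proof (intro conjI ballI impI)
  show go_in: "go q \<in> Obj (free_cat N E s t)" if "q \<in> Obj (free_cat N' E' s' t')" for q
    using bij_nodes that by (auto simp: bij_betw_def free_cat_simps)
  fix f
  assume "f \<in> Arr (free_cat N' E' s' t')"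
  then obtain q es where f: "f = (q, es)" and q: "q \<in> N'" and es: "path_ok E' s' t' q es"
    by (cases f) (simp add: free_cat_Arr)
  show "free_cat_map go ge f \<in> Arr (free_cat N E s t)"
    "Dom (free_cat N E s t) (free_cat_map go ge f) = go (Dom (free_cat N' E' s' t') f)"
    "Cod (free_cat N E s t) (free_cat_map go ge f) = go (Cod (free_cat N' E' s' t') f)"
    using go_in[of q] q path_ok_map[OF q es] path_end_map[OF path_ok_set[OF es]]
    by (simp_all add: f free_cat_map_def free_cat_Arr free_cat_simps)
next
  fix q
  show "free_cat_map go ge (Id (free_cat N' E' s' t') q) = Id (free_cat N E s t) (go q)"
    by (simp add: free_cat_map_def free_cat_simps)
next
  fix f g :: "'n \<times> 'e list"
  show "free_cat_map go ge (Comp (free_cat N' E' s' t') f g) =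
      Comp (free_cat N E s t) (free_cat_map go ge f) (free_cat_map go ge g)"
    by (cases f, cases g) (simp add: free_cat_map_def free_cat_simps)
qed

lemma free_cat_map_bij:
  "bij_betw (free_cat_map go ge) (Arr (free_cat N' E' s' t')) (Arr (free_cat N E s t))"
proof (rule bij_betw_imageI)
  show "inj_on (free_cat_map go ge) (Arr (free_cat N' E' s' t'))"
  proof (rule inj_onI, clarify)
    fix q es q' es'
    assume paths: "(q, es) \<in> Arr (free_cat N' E' s' t')" "(q', es') \<in> Arr (free_cat N' E' s' t')"
      and "free_cat_map go ge (q, es) = free_cat_map go ge (q', es')"
    moreover have "inj_on ge (set es \<union> set es')" "inj_on go N'"
      using paths bij_nodes bij_edges
      by (auto simp: free_cat_Arr bij_betw_def dest!: path_ok_set intro: inj_on_subset)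
    ultimately show "q = q' \<and> es = es'"
      by (auto simp: free_cat_Arr free_cat_map_def inj_on_eq_iff inj_on_map_eq_map)
  qed
  show "free_cat_map go ge ` Arr (free_cat N' E' s' t') = Arr (free_cat N E s t)"
  proof
    show "free_cat_map go ge ` Arr (free_cat N' E' s' t') \<subseteq> Arr (free_cat N E s t)"
      using free_cat_map_is_functor by (auto simp: is_functor_def)
  next
    show "Arr (free_cat N E s t) \<subseteq> free_cat_map go ge ` Arr (free_cat N' E' s' t')"
    proof clarify
      fix x fs
      assume "(x, fs) \<in> Arr (free_cat N E s t)"
      then have "x \<in> go ` N'" and fs: "path_ok E s t x fs" "fs \<in> lists (ge ` E')"
        using bij_nodes bij_edges by (auto simp: free_cat_Arr bij_betw_def dest: path_ok_set)
      then obtain q es where "q \<in> N'" "x = go q" "es \<in> lists E'" "fs = map ge es"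
        by (auto simp: lists_image)
      with fs path_ok_map_iff show "(x, fs) \<in> free_cat_map go ge ` Arr (free_cat N' E' s' t')"
        by (intro image_eqI[of _ _ "(q, es)"]) (auto simp: free_cat_map_def free_cat_Arr)
    qed
  qed
qed

end

section \<open>Functors and isomorphisms\<close>

lemma is_functor_comp:
  assumes "is_functor A B Fo Fm" and "is_functor B C Go Gm"
  shows "is_functor A C (Go \<circ> Fo) (Gm \<circ> Fm)"
  using assms unfolding is_functor_def by (auto simp: Ball_def)

lemma is_cat_iso_inv_into:
  assumes D: "is_category D" and G: "is_functor D C Go Gm"
    and bij_obj: "bij_betw Go (Obj D) (Obj C)" and bij_arr: "bij_betw Gm (Arr D) (Arr C)"
  shows "is_cat_iso C D (inv_into (Obj D) Go) (inv_into (Arr D) Gm)"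
proof -
  define Fo where "Fo = inv_into (Obj D) Go"
  define Fm where "Fm = inv_into (Arr D) Gm"
  have Fo: "Fo x \<in> Obj D" "Go (Fo x) = x" if "x \<in> Obj C" for x
    using bij_obj that unfolding Fo_def by (auto simp: bij_betw_def f_inv_into_f inv_into_into)
  have Fm: "Fm f \<in> Arr D" "Gm (Fm f) = f" if "f \<in> Arr C" for f
    using bij_arr that unfolding Fm_def by (auto simp: bij_betw_def f_inv_into_f inv_into_into)
  have Fo_Go: "Fo (Go y) = y" if "y \<in> Obj D" for y
    using bij_obj that unfolding Fo_def by (simp add: bij_betw_def)
  have Fm_Gm: "Fm (Gm g) = g" if "g \<in> Arr D" for g
    using bij_arr that unfolding Fm_def by (simp add: bij_betw_def)
  have "is_functor C D Fo Fm"
    unfolding is_functor_def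
  proof (intro conjI ballI impI)
    fix f
    assume f: "f \<in> Arr C"
    show "Fm f \<in> Arr D"
      using Fm f by blast
    show "Dom D (Fm f) = Fo (Dom C f)" "Cod D (Fm f) = Fo (Cod C f)"
      using Fm[OF f] G D Fo_Go unfolding is_functor_def is_category_def by metis+
  next
    fix x
    assume "x \<in> Obj C"
    then show "Fm (Id C x) = Id D (Fo x)"
      using Fo G D Fm_Gm unfolding is_functor_def is_category_def by metis
  next
    fix f g
    assume f: "f \<in> Arr C" and g: "g \<in> Arr C" and fg: "Cod C f = Dom C g"
    have "Cod D (Fm f) = Dom D (Fm g)"
      using Fm[OF f] Fm[OF g] fg G D Fo_Go unfolding is_functor_def is_category_def by metis
    then show "Fm (Comp C f g) = Comp D (Fm f) (Fm g)"
      using Fm[OF f] Fm[OF g] G D Fm_Gm unfolding is_functor_def is_category_def by metis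
  qed (use Fo in blast)
  then show ?thesis
    unfolding is_cat_iso_def Fo_def[symmetric] Fm_def[symmetric]
    using G Fo Fm Fo_Go Fm_Gm by blast
qed

lemma is_ULF_iso_transfer:
  assumes iso: "is_cat_iso C D Fo Fm" and over: "\<forall>f\<in>Arr C. Pm f = P'm (Fm f)"
    and ULF: "is_ULF D B P'o P'm"
  shows "is_ULF C B Po Pm"
  unfolding is_ULF_def
proof (intro ballI impI)
  obtain Go Gm where F: "is_functor C D Fo Fm" and G: "is_functor D C Go Gm"
    and GmFm: "\<forall>f\<in>Arr C. Gm (Fm f) = f" and FmGm: "\<forall>g\<in>Arr D. Fm (Gm g) = g"
    using iso unfolding is_cat_iso_def by blast
  fix \<alpha> u v
  assume \<alpha>: "\<alpha> \<in> Arr C" and uv: "u \<in> Arr B" "v \<in> Arr B" "Cod B u = Dom B v"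
    and \<alpha>_uv: "Pm \<alpha> = Comp B u v"
  have "Fm \<alpha> \<in> Arr D" "P'm (Fm \<alpha>) = Comp B u v"
    using \<alpha> \<alpha>_uv F over unfolding is_functor_def by auto
  with ULF uv have "\<exists>!(b, c). b \<in> Arr D \<and> c \<in> Arr D \<and> Cod D b = Dom D c \<and> Fm \<alpha> = Comp D b c \<and>
      P'm b = u \<and> P'm c = v"
    unfolding is_ULF_def by blast
  then obtain b' c' where fac: "b' \<in> Arr D" "c' \<in> Arr D" "Cod D b' = Dom D c'"
      "Fm \<alpha> = Comp D b' c'" "P'm b' = u" "P'm c' = v"
    and uniq: "\<And>b c. b \<in> Arr D \<and> c \<in> Arr D \<and> Cod D b = Dom D c \<and> Fm \<alpha> = Comp D b c \<and>
      P'm b = u \<and> P'm c = v \<Longrightarrow> b = b' \<and> c = c'"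
    by (elim ex1_pairE) blast
  show "\<exists>!(b, c). b \<in> Arr C \<and> c \<in> Arr C \<and> Cod C b = Dom C c \<and> \<alpha> = Comp C b c \<and>
      Pm b = u \<and> Pm c = v"
  proof (rule ex1_pairI)
    have "\<alpha> = Gm (Comp D b' c')"
      using fac(4) GmFm \<alpha> by metis
    then show "Gm b' \<in> Arr C \<and> Gm c' \<in> Arr C \<and> Cod C (Gm b') = Dom C (Gm c') \<and>
        \<alpha> = Comp C (Gm b') (Gm c') \<and> Pm (Gm b') = u \<and> Pm (Gm c') = v"
      using fac G over FmGm unfolding is_functor_def by auto
  next
    fix b c
    assume fac_C: "b \<in> Arr C \<and> c \<in> Arr C \<and> Cod C b = Dom C c \<and> \<alpha> = Comp C b c \<and>
      Pm b = u \<and> Pm c = v"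
    then have "Fm b = b' \<and> Fm c = c'"
      using F over by (intro uniq) (auto simp: is_functor_def)
    with GmFm fac_C show "b = Gm b' \<and> c = Gm c'"
      by metis
  qed
qed

lemma is_finitary_iso_transfer:
  assumes iso: "is_cat_iso C D Fo Fm"
    and over_obj: "\<forall>x\<in>Obj C. Po x = P'o (Fo x)" and over_arr: "\<forall>f\<in>Arr C. Pm f = P'm (Fm f)"
    and fin: "is_finitary D B P'o P'm"
  shows "is_finitary C B Po Pm"
proof -
  obtain Go Gm where F: "is_functor C D Fo Fm"
    and GoFo: "\<forall>x\<in>Obj C. Go (Fo x) = x" and GmFm: "\<forall>f\<in>Arr C. Gm (Fm f) = f"
    using iso unfolding is_cat_iso_def by blast
  have "{X \<in> Obj C. Po X = A} \<subseteq> Go ` {Y \<in> Obj D. P'o Y = A}" for A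
    using F GoFo over_obj unfolding is_functor_def by (auto intro!: rev_image_eqI)
  moreover have "{\<alpha> \<in> Arr C. Pm \<alpha> = w} \<subseteq> Gm ` {\<alpha> \<in> Arr D. P'm \<alpha> = w}" for w
    using F GmFm over_arr unfolding is_functor_def by (auto intro!: rev_image_eqI)
  ultimately show ?thesis
    using fin unfolding is_finitary_def by (meson finite_imageI finite_subset)
qed

section \<open>The functor of an automaton\<close>

lemma nfa_functor_is_ULF:
  assumes "\<forall>t\<in>T. nfa_tgt \<delta> t \<in> Q"
  shows "is_ULF (nfa_cat Q T \<delta>) (FB \<Sigma>) Po (nfa_functor_arr \<delta>)"
  unfolding is_ULF_def
proof (intro ballI impI)
  let ?F = "nfa_cat Q T \<delta>"
  have factor_iff: "b \<in> Arr ?F \<and> c \<in> Arr ?F \<and> Cod ?F b = Dom ?F c \<and> (q, ts) = Comp ?F b c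
      \<longleftrightarrow> (q, ts) \<in> Arr ?F \<and> (\<exists>xs ys. ts = xs @ ys \<and> b = (q, xs) \<and> c = (path_end (nfa_tgt \<delta>) q xs, ys))"
    for b c q ts
    unfolding nfa_cat_def using free_cat_factor_iff[OF assms] .
  fix \<alpha> u v
  assume \<alpha>: "\<alpha> \<in> Arr ?F" and \<alpha>_uv: "nfa_functor_arr \<delta> \<alpha> = Comp (FB \<Sigma>) u v"
  obtain q ts where \<alpha>_eq: "\<alpha> = (q, ts)"
    by fastforce
  have "map (nfa_lbl \<delta>) ts = snd u @ snd v"
    using \<alpha>_uv by (simp add: \<alpha>_eq nfa_functor_arr_def FB_simps)
  then obtain xs ys where ts: "ts = xs @ ys" and xs: "map (nfa_lbl \<delta>) xs = snd u"
    and ys: "map (nfa_lbl \<delta>) ys = snd v"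
    by (auto simp: map_eq_append_conv)
  have over: "nfa_functor_arr \<delta> (q', zs) = w \<longleftrightarrow> map (nfa_lbl \<delta>) zs = snd w" for q' zs w
    by (cases w) (auto simp: nfa_functor_arr_def)
  show "\<exists>!(b, c). b \<in> Arr ?F \<and> c \<in> Arr ?F \<and> Cod ?F b = Dom ?F c \<and> \<alpha> = Comp ?F b c \<and>
      nfa_functor_arr \<delta> b = u \<and> nfa_functor_arr \<delta> c = v"
  proof (rule ex1_pairI)
    show "(q, xs) \<in> Arr ?F \<and> (path_end (nfa_tgt \<delta>) q xs, ys) \<in> Arr ?F \<and>
        Cod ?F (q, xs) = Dom ?F (path_end (nfa_tgt \<delta>) q xs, ys) \<and>
        \<alpha> = Comp ?F (q, xs) (path_end (nfa_tgt \<delta>) q xs, ys) \<and>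
        nfa_functor_arr \<delta> (q, xs) = u \<and> nfa_functor_arr \<delta> (path_end (nfa_tgt \<delta>) q xs, ys) = v"
      using factor_iff[of "(q, xs)" "(path_end (nfa_tgt \<delta>) q xs, ys)" q ts] \<alpha> xs ys
      by (auto simp: \<alpha>_eq ts over)
  next
    fix b c
    assume "b \<in> Arr ?F \<and> c \<in> Arr ?F \<and> Cod ?F b = Dom ?F c \<and> \<alpha> = Comp ?F b c \<and>
      nfa_functor_arr \<delta> b = u \<and> nfa_functor_arr \<delta> c = v"
    then obtain xs' ys' where "ts = xs' @ ys'" "b = (q, xs')" "c = (path_end (nfa_tgt \<delta>) q xs', ys')"
      "map (nfa_lbl \<delta>) xs' = snd u"
      using factor_iff[of b c q ts] by (auto simp: \<alpha>_eq nfa_functor_arr_def)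
    moreover from this have "xs' = xs \<and> ys' = ys"
      using ts xs by (metis append_eq_append_conv length_map)
    ultimately show "b = (q, xs) \<and> c = (path_end (nfa_tgt \<delta>) q xs, ys)"
      by simp
  qed
qed

lemma nfa_functor_is_finitary:
  assumes "finite Q" and "finite T"
  shows "is_finitary (nfa_cat Q T \<delta>) (FB \<Sigma>) Po (nfa_functor_arr \<delta>)"
  unfolding is_finitary_def
proof (intro conjI ballI)
  fix w :: "unit \<times> 'c list"
  have "{\<alpha> \<in> Arr (nfa_cat Q T \<delta>). nfa_functor_arr \<delta> \<alpha> = w}
      \<subseteq> Q \<times> {ts. set ts \<subseteq> T \<and> length ts = length (snd w)}"
    by (auto simp: nfa_cat_def free_cat_def nfa_functor_arr_def dest: path_ok_set)
  then show "finite {\<alpha> \<in> Arr (nfa_cat Q T \<delta>). nfa_functor_arr \<delta> \<alpha> = w}"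
    using assms by (simp add: finite_lists_length_eq finite_subset)
qed (use assms in \<open>simp add: nfa_cat_def free_cat_def\<close>)

lemma nfa_iso_imp_ULF_finitary:
  assumes "finite Q" and "finite T" and \<delta>: "\<forall>t\<in>T. \<delta> t \<in> Q \<times> \<Sigma> \<times> Q"
    and iso: "is_cat_iso C (nfa_cat Q T \<delta>) Fo Fm"
    and over: "\<forall>f\<in>Arr C. Pm f = nfa_functor_arr \<delta> (Fm f)"
  shows "is_ULF C (FB \<Sigma>) Po Pm \<and> is_finitary C (FB \<Sigma>) Po Pm"
proof
  have "\<forall>t\<in>T. nfa_tgt \<delta> t \<in> Q"
    using \<delta> by (auto simp: nfa_tgt_def)
  then show "is_ULF C (FB \<Sigma>) Po Pm"
    using is_ULF_iso_transfer[OF iso over nfa_functor_is_ULF] by blast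
  show "is_finitary C (FB \<Sigma>) Po Pm"
    using is_finitary_iso_transfer[OF iso _ over nfa_functor_is_finitary[OF assms(1,2)]] by simp
qed

section \<open>ULF functors into the free monoid\<close>

fun comp_path :: "('o, 'm) cat \<Rightarrow> 'o \<Rightarrow> 'm list \<Rightarrow> 'm" where
  "comp_path C x [] = Id C x"
| "comp_path C x (f # fs) = Comp C f (comp_path C (Cod C f) fs)"

locale ulf_functor =
  fixes \<Sigma> :: "'c set" and C :: "('o, 'm) cat"
    and Po :: "'o \<Rightarrow> unit" and Pm :: "'m \<Rightarrow> unit \<times> 'c list"
  assumes category_C: "is_category C"
    and functor_P: "is_functor C (FB \<Sigma>) Po Pm"
    and ULF_P: "is_ULF C (FB \<Sigma>) Po Pm"
begin

lemma Dom_in: "f \<in> Arr C \<Longrightarrow> Dom C f \<in> Obj C"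
  and Cod_in: "f \<in> Arr C \<Longrightarrow> Cod C f \<in> Obj C"
  and Id_in: "x \<in> Obj C \<Longrightarrow> Id C x \<in> Arr C"
  and Dom_Id: "x \<in> Obj C \<Longrightarrow> Dom C (Id C x) = x"
  and Cod_Id: "x \<in> Obj C \<Longrightarrow> Cod C (Id C x) = x"
  and Comp_in: "f \<in> Arr C \<Longrightarrow> g \<in> Arr C \<Longrightarrow> Cod C f = Dom C g \<Longrightarrow> Comp C f g \<in> Arr C"
  and Dom_Comp: "f \<in> Arr C \<Longrightarrow> g \<in> Arr C \<Longrightarrow> Cod C f = Dom C g \<Longrightarrow> Dom C (Comp C f g) = Dom C f"
  and Cod_Comp: "f \<in> Arr C \<Longrightarrow> g \<in> Arr C \<Longrightarrow> Cod C f = Dom C g \<Longrightarrow> Cod C (Comp C f g) = Cod C g"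
  and Comp_Id_left: "f \<in> Arr C \<Longrightarrow> Comp C (Id C (Dom C f)) f = f"
  and Comp_Id_right: "f \<in> Arr C \<Longrightarrow> Comp C f (Id C (Cod C f)) = f"
  and Comp_assoc: "f \<in> Arr C \<Longrightarrow> g \<in> Arr C \<Longrightarrow> h \<in> Arr C \<Longrightarrow> Cod C f = Dom C g \<Longrightarrow>
    Cod C g = Dom C h \<Longrightarrow> Comp C (Comp C f g) h = Comp C f (Comp C g h)"
  using category_C unfolding is_category_def by auto

definition word :: "'m \<Rightarrow> 'c list" where
  "word f = snd (Pm f)"

definition atoms :: "'m set" where
  "atoms = {f \<in> Arr C. length (word f) = 1}"

definition letter :: "'m \<Rightarrow> 'c" where
  "letter f = hd (word f)"

abbreviation atom_cat :: "('o, 'o \<times> 'm list) cat" where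
  "atom_cat \<equiv> free_cat (Obj C) atoms (Dom C) (Cod C)"

lemma Pm_eq_word: "Pm f = ((), word f)"
  by (simp add: word_def prod_eq_iff)

lemma word_in: "f \<in> Arr C \<Longrightarrow> set (word f) \<subseteq> \<Sigma>"
  using functor_P FB_Arr[of "word f" \<Sigma>] by (simp add: is_functor_def Pm_eq_word)

lemma word_Id: "x \<in> Obj C \<Longrightarrow> word (Id C x) = []"
  using functor_P by (auto simp: is_functor_def FB_simps word_def)

lemma word_Comp:
  "f \<in> Arr C \<Longrightarrow> g \<in> Arr C \<Longrightarrow> Cod C f = Dom C g \<Longrightarrow> word (Comp C f g) = word f @ word g"
  using functor_P by (auto simp: is_functor_def FB_simps word_def)

lemma atom_word: "f \<in> atoms \<Longrightarrow> word f = [letter f]"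
  by (cases "word f") (auto simp: atoms_def letter_def)

lemma letter_in:
  assumes "f \<in> atoms"
  shows "letter f \<in> \<Sigma>"
proof -
  have "letter f \<in> set (word f)"
    using atom_word[OF assms] by simp
  with word_in assms show ?thesis
    by (auto simp: atoms_def)
qed

lemma factor_ex1:
  assumes "f \<in> Arr C" and "word f = u @ v"
  shows "\<exists>!(g, h). g \<in> Arr C \<and> h \<in> Arr C \<and> Cod C g = Dom C h \<and> f = Comp C g h \<and>
    word g = u \<and> word h = v"
proof -
  have "((), u) \<in> Arr (FB \<Sigma>)" "((), v) \<in> Arr (FB \<Sigma>)" "Pm f = Comp (FB \<Sigma>) ((), u) ((), v)"
    using assms word_in[of f] by (auto simp: FB_Arr FB_simps Pm_eq_word)
  with ULF_P assms(1) have "\<exists>!(g, h). g \<in> Arr C \<and> h \<in> Arr C \<and> Cod C g = Dom C h \<and>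
      f = Comp C g h \<and> Pm g = ((), u) \<and> Pm h = ((), v)"
    unfolding is_ULF_def FB_simps by blast
  then show ?thesis
    by (simp only: Pm_eq_word prod.inject simp_thms)
qed

lemma factor_unique:
  assumes g: "g \<in> Arr C" "h \<in> Arr C" "Cod C g = Dom C h"
    and g': "g' \<in> Arr C" "h' \<in> Arr C" "Cod C g' = Dom C h'"
    and eq: "Comp C g h = Comp C g' h'" and word_eq: "word g = word g'"
  shows "g = g' \<and> h = h'"
proof -
  have "word (Comp C g h) = word g @ word h" "word h = word h'"
    using word_Comp[OF g] word_Comp[OF g'] eq word_eq by simp_all
  from factor_ex1[OF Comp_in[OF g] this(1)] obtain g0 h0
    where "\<And>g1 h1. g1 \<in> Arr C \<and> h1 \<in> Arr C \<and> Cod C g1 = Dom C h1 \<and> Comp C g h = Comp C g1 h1 \<and>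
      word g1 = word g \<and> word h1 = word h \<Longrightarrow> g1 = g0 \<and> h1 = h0"
    by (elim ex1_pairE) blast
  from this[of g h] this[of g' h'] show ?thesis
    using g g' eq word_eq \<open>word h = word h'\<close> by simp
qed

lemma Id_if_word_Nil: "f \<in> Arr C \<Longrightarrow> word f = [] \<Longrightarrow> f = Id C (Dom C f)"
  using factor_unique[of "Id C (Dom C f)" f f "Id C (Cod C f)"]
  by (simp add: Dom_in Cod_in Id_in Dom_Id Cod_Id Comp_Id_left Comp_Id_right word_Id)

lemma comp_path_in:
  assumes "x \<in> Obj C" and "path_ok atoms (Dom C) (Cod C) x fs"
  shows "comp_path C x fs \<in> Arr C \<and> Dom C (comp_path C x fs) = x \<and>
    Cod C (comp_path C x fs) = path_end (Cod C) x fs"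
  using assms
  by (induction fs arbitrary: x) (auto simp: atoms_def Id_in Dom_Id Cod_Id Cod_in Comp_in Dom_Comp Cod_Comp)

lemma word_comp_path:
  assumes "x \<in> Obj C" and "path_ok atoms (Dom C) (Cod C) x fs"
  shows "word (comp_path C x fs) = map letter fs"
  using assms
proof (induction fs arbitrary: x)
  case (Cons f fs)
  then have "f \<in> atoms" "f \<in> Arr C" "Cod C f \<in> Obj C" "Dom C f = x"
    by (auto simp: atoms_def Cod_in)
  with Cons comp_path_in[of "Cod C f" fs] show ?case
    by (simp add: word_Comp atom_word)
qed (simp add: word_Id)

lemma comp_path_append:
  assumes "x \<in> Obj C" and "path_ok atoms (Dom C) (Cod C) x (fs @ gs)"
  shows "comp_path C x (fs @ gs) = Comp C (comp_path C x fs) (comp_path C (path_end (Cod C) x fs) gs)"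
  using assms
proof (induction fs arbitrary: x)
  case Nil
  then show ?case
    using comp_path_in[of x gs] Comp_Id_left by fastforce
next
  case (Cons f fs)
  then have f: "f \<in> Arr C" "Dom C f = x" and y: "Cod C f \<in> Obj C"
    and fs: "path_ok atoms (Dom C) (Cod C) (Cod C f) fs"
    and gs: "path_ok atoms (Dom C) (Cod C) (path_end (Cod C) (Cod C f) fs) gs"
    by (auto simp: atoms_def Cod_in path_ok_append)
  have "path_end (Cod C) (Cod C f) fs \<in> Obj C"
    using comp_path_in[OF y fs] Cod_in by metis
  then show ?case
    using Cons.IH[OF y] Cons.prems(2) f comp_path_in[OF y fs] comp_path_in[OF _ gs]
    by (simp add: Comp_assoc)
qed

lemma comp_path_surj:
  assumes "f \<in> Arr C"
  shows "\<exists>fs. path_ok atoms (Dom C) (Cod C) (Dom C f) fs \<and> comp_path C (Dom C f) fs = f"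
  using assms
proof (induction "length (word f)" arbitrary: f)
  case 0
  then show ?case
    using Id_if_word_Nil by (intro exI[of _ "[]"]) simp
next
  case (Suc n)
  then obtain a w where "word f = [a] @ w"
    by (cases "word f") auto
  with factor_ex1[OF Suc.prems this] obtain g h where gh: "g \<in> Arr C" "h \<in> Arr C"
    "Cod C g = Dom C h" "f = Comp C g h" "word g = [a]" "word h = w"
    by (elim ex1_pairE) blast
  moreover from Suc.hyps(1)[of h] gh Suc.hyps(2) \<open>word f = [a] @ w\<close>
  obtain hs where "path_ok atoms (Dom C) (Cod C) (Dom C h) hs" "comp_path C (Dom C h) hs = h"
    by auto
  ultimately show ?case
    by (intro exI[of _ "g # hs"]) (simp add: atoms_def Dom_Comp)
qed

lemma comp_path_inj:
  assumes "x \<in> Obj C" and "path_ok atoms (Dom C) (Cod C) x fs"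
    and "x' \<in> Obj C" and "path_ok atoms (Dom C) (Cod C) x' fs'"
    and "comp_path C x fs = comp_path C x' fs'"
  shows "x = x' \<and> fs = fs'"
  using assms
proof (induction fs arbitrary: x x' fs')
  case Nil
  then have "fs' = []"
    using word_comp_path[of x "[]"] word_comp_path[of x' fs'] by simp
  with Nil show ?case
    using Dom_Id by (metis comp_path.simps(1))
next
  case (Cons f fs)
  have "map letter (f # fs) = map letter fs'"
    using word_comp_path[OF Cons.prems(1,2)] word_comp_path[OF Cons.prems(3,4)] Cons.prems(5) by simp
  then obtain f' fs'' where fs': "fs' = f' # fs''" and "letter f = letter f'"
    by (cases fs') auto
  moreover from Cons.prems fs' have f: "f \<in> atoms" "Dom C f = x" and f': "f' \<in> atoms" "Dom C f' = x'"
    and paths: "path_ok atoms (Dom C) (Cod C) (Cod C f) fs"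
      "path_ok atoms (Dom C) (Cod C) (Cod C f') fs''"
    by auto
  ultimately have "word f = word f'"
    by (simp add: atom_word)
  have y: "Cod C f \<in> Obj C" "Cod C f' \<in> Obj C"
    using f f' Cod_in by (auto simp: atoms_def)
  have "f = f' \<and> comp_path C (Cod C f) fs = comp_path C (Cod C f') fs''"
    using \<open>word f = word f'\<close> Cons.prems(5) fs' f f' comp_path_in[OF y(1) paths(1)]
      comp_path_in[OF y(2) paths(2)]
    by (intro factor_unique) (auto simp: atoms_def)
  with Cons.IH[OF y(1) paths(1) y(2) paths(2)] f f' fs' show ?case
    by auto
qed

lemma comp_path_is_functor: "is_functor atom_cat C id (case_prod (comp_path C))"
  unfolding is_functor_def
proof (intro conjI ballI impI)
  fix p
  assume "p \<in> Arr atom_cat"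
  then obtain x fs where p: "p = (x, fs)" and x: "x \<in> Obj C"
    and fs: "path_ok atoms (Dom C) (Cod C) x fs"
    by (cases p) (simp add: free_cat_Arr)
  show "case_prod (comp_path C) p \<in> Arr C"
    "Dom C (case_prod (comp_path C) p) = id (Dom atom_cat p)"
    "Cod C (case_prod (comp_path C) p) = id (Cod atom_cat p)"
    using comp_path_in[OF x fs] by (simp_all add: p free_cat_simps)
next
  fix p q
  assume "p \<in> Arr atom_cat" "q \<in> Arr atom_cat" "Cod atom_cat p = Dom atom_cat q"
  then obtain x fs gs where "p = (x, fs)" "q = (path_end (Cod C) x fs, gs)" "x \<in> Obj C"
    "path_ok atoms (Dom C) (Cod C) x (fs @ gs)"
    by (cases p, cases q) (simp add: free_cat_Arr free_cat_simps path_ok_append)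
  then show "case_prod (comp_path C) (Comp atom_cat p q) =
      Comp C (case_prod (comp_path C) p) (case_prod (comp_path C) q)"
    using comp_path_append by (simp add: free_cat_simps)
qed (simp_all add: free_cat_simps)

lemma comp_path_bij: "bij_betw (case_prod (comp_path C)) (Arr atom_cat) (Arr C)"
proof (rule bij_betw_imageI)
  show "inj_on (case_prod (comp_path C)) (Arr atom_cat)"
    using comp_path_inj by (auto intro!: inj_onI simp: free_cat_Arr)
  show "case_prod (comp_path C) ` Arr atom_cat = Arr C"
    using comp_path_in comp_path_surj Dom_in
    by (fastforce simp: free_cat_Arr intro: rev_image_eqI[of "(Dom C _, _)"])
qed

definition atom_nfa :: "'q set \<Rightarrow> ('q \<Rightarrow> 'o) \<Rightarrow> ('t \<Rightarrow> 'm) \<Rightarrow> 't \<Rightarrow> 'q \<times> 'c \<times> 'q" where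
  "atom_nfa Q go ge t = (inv_into Q go (Dom C (ge t)), letter (ge t), inv_into Q go (Cod C (ge t)))"

context
  fixes Q :: "'q set" and T :: "'t set" and go :: "'q \<Rightarrow> 'o" and ge :: "'t \<Rightarrow> 'm"
  assumes go: "bij_betw go Q (Obj C)" and ge: "bij_betw ge T atoms"
begin

lemma atom_endpoints:
  assumes "t \<in> T"
  shows "ge t \<in> atoms" "Dom C (ge t) \<in> go ` Q" "Cod C (ge t) \<in> go ` Q"
proof -
  show "ge t \<in> atoms"
    using ge assms by (auto simp: bij_betw_def)
  then show "Dom C (ge t) \<in> go ` Q" "Cod C (ge t) \<in> go ` Q"
    using go Dom_in Cod_in by (auto simp: bij_betw_def atoms_def)
qed

lemma atom_nfa_in: "\<forall>t\<in>T. atom_nfa Q go ge t \<in> Q \<times> \<Sigma> \<times> Q"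
  using atom_endpoints letter_in by (simp add: atom_nfa_def inv_into_into)

lemma atom_nfa_src: "\<forall>t\<in>T. Dom C (ge t) = go (nfa_src (atom_nfa Q go ge) t)"
  and atom_nfa_tgt: "\<forall>t\<in>T. Cod C (ge t) = go (nfa_tgt (atom_nfa Q go ge) t)"
  using atom_endpoints by (simp_all add: atom_nfa_def nfa_src_def nfa_tgt_def f_inv_into_f)

lemma atom_nfa_iso:
  "\<exists>Fo Fm. is_cat_iso C (nfa_cat Q T (atom_nfa Q go ge)) Fo Fm \<and>
    (\<forall>f\<in>Arr C. Pm f = nfa_functor_arr (atom_nfa Q go ge) (Fm f))"
proof -
  let ?\<delta> = "atom_nfa Q go ge"
  have graph: "\<forall>t\<in>T. nfa_src ?\<delta> t \<in> Q \<and> nfa_tgt ?\<delta> t \<in> Q"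
    using atom_nfa_in by (auto simp: nfa_src_def nfa_tgt_def)
  note relabel_functor = free_cat_map_is_functor[OF graph go ge atom_nfa_src atom_nfa_tgt]
  define G where "G = case_prod (comp_path C) \<circ> free_cat_map go ge"
  have "is_functor (nfa_cat Q T ?\<delta>) C (id \<circ> go) G"
    unfolding G_def nfa_cat_def using relabel_functor comp_path_is_functor by (rule is_functor_comp)
  moreover have G_bij: "bij_betw G (Arr (nfa_cat Q T ?\<delta>)) (Arr C)"
    unfolding G_def nfa_cat_def
    by (rule bij_betw_trans[OF free_cat_map_bij[OF graph go ge atom_nfa_src atom_nfa_tgt] comp_path_bij])
  moreover have "bij_betw (id \<circ> go) (Obj (nfa_cat Q T ?\<delta>)) (Obj C)"
    using go by (simp add: nfa_cat_def free_cat_simps)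
  moreover have "is_category (nfa_cat Q T ?\<delta>)"
    unfolding nfa_cat_def using graph by (blast intro: free_cat_is_category)
  ultimately have "is_cat_iso C (nfa_cat Q T ?\<delta>) (inv_into (Obj (nfa_cat Q T ?\<delta>)) (id \<circ> go))
      (inv_into (Arr (nfa_cat Q T ?\<delta>)) G)"
    by (intro is_cat_iso_inv_into)
  moreover have "Pm (G p) = nfa_functor_arr ?\<delta> p" if p_in: "p \<in> Arr (nfa_cat Q T ?\<delta>)" for p
  proof -
    obtain q ts where p: "p = (q, ts)"
      by fastforce
    have "free_cat_map go ge p \<in> Arr atom_cat"
      using relabel_functor p_in by (simp add: is_functor_def nfa_cat_def)
    then have "go q \<in> Obj C" "path_ok atoms (Dom C) (Cod C) (go q) (map ge ts)"
      by (simp_all add: p free_cat_map_def free_cat_Arr)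
    then show ?thesis
      by (simp add: G_def p free_cat_map_def Pm_eq_word word_comp_path nfa_functor_arr_def
          nfa_lbl_def atom_nfa_def)
  qed
  with G_bij have "\<forall>f\<in>Arr C. Pm f = nfa_functor_arr ?\<delta> (inv_into (Arr (nfa_cat Q T ?\<delta>)) G f)"
    by (metis bij_betw_imp_surj_on f_inv_into_f inv_into_into)
  ultimately show ?thesis
    by blast
qed

end

lemma finite_Obj: "is_finitary C (FB \<Sigma>) Po Pm \<Longrightarrow> finite (Obj C)"
  by (simp add: is_finitary_def FB_simps)

lemma finite_atoms:
  assumes "finite \<Sigma>" and "is_finitary C (FB \<Sigma>) Po Pm"
  shows "finite atoms"
proof (rule finite_subset)
  show "atoms \<subseteq> (\<Union>a\<in>\<Sigma>. {f \<in> Arr C. Pm f = ((), [a])})"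
  proof
    fix f
    assume f: "f \<in> atoms"
    then have "f \<in> Arr C"
      by (simp add: atoms_def)
    with atom_word[OF f] letter_in[OF f] show "f \<in> (\<Union>a\<in>\<Sigma>. {f \<in> Arr C. Pm f = ((), [a])})"
      by (auto simp: Pm_eq_word)
  qed
  show "finite (\<Union>a\<in>\<Sigma>. {f \<in> Arr C. Pm f = ((), [a])})"
    using assms by (auto simp: is_finitary_def FB_Arr)
qed

lemma ex_nfa_iso:
  assumes "finite \<Sigma>" and finitary: "is_finitary C (FB \<Sigma>) Po Pm"
  shows "\<exists>(Q :: nat set) (T :: nat set) (\<delta> :: nat \<Rightarrow> nat \<times> 'c \<times> nat).
    finite Q \<and> finite T \<and> (\<forall>t\<in>T. \<delta> t \<in> Q \<times> \<Sigma> \<times> Q) \<and>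
    (\<exists>Fo Fm. is_cat_iso C (nfa_cat Q T \<delta>) Fo Fm \<and>
      (\<forall>x\<in>Obj C. Po x = ()) \<and> (\<forall>f\<in>Arr C. Pm f = nfa_functor_arr \<delta> (Fm f)))"
proof -
  define Q where "Q = {0..<card (Obj C)}"
  define T where "T = {0..<card atoms}"
  obtain go where go: "bij_betw go Q (Obj C)"
    using ex_bij_betw_nat_finite[OF finite_Obj[OF finitary]] unfolding Q_def by blast
  obtain ge where ge: "bij_betw ge T atoms"
    using ex_bij_betw_nat_finite[OF finite_atoms[OF assms]] unfolding T_def by blast
  have "finite Q" "finite T"
    by (simp_all add: Q_def T_def)
  with atom_nfa_in[OF go ge] atom_nfa_iso[OF go ge] show ?thesis
    by (intro exI[of _ Q] exI[of _ T] exI[of _ "atom_nfa Q go ge"]) simp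
qed

end

theorem mainTheorem3:
  fixes \<Sigma> :: "'c set"
    and Qc :: "('o, 'm) cat"
    and Po :: "'o \<Rightarrow> unit" and Pm :: "'m \<Rightarrow> unit \<times> 'c list"
  assumes "finite \<Sigma>"
    and "is_category Qc"
    and "is_functor Qc (FB \<Sigma>) Po Pm"
  shows "(is_ULF Qc (FB \<Sigma>) Po Pm \<and> is_finitary Qc (FB \<Sigma>) Po Pm) \<longleftrightarrow>
    (\<exists>(Q :: nat set) (T :: nat set) (\<delta> :: nat \<Rightarrow> nat \<times> 'c \<times> nat).
       finite Q \<and> finite T \<and> (\<forall>t\<in>T. \<delta> t \<in> Q \<times> \<Sigma> \<times> Q) \<and>
       (\<exists>Fo Fm. is_cat_iso Qc (nfa_cat Q T \<delta>) Fo Fm \<and>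
          (\<forall>x\<in>Obj Qc. Po x = ()) \<and>
          (\<forall>f\<in>Arr Qc. Pm f = nfa_functor_arr \<delta> (Fm f))))"
proof (rule iffI, goal_cases)
  case 1
  then interpret ulf_functor \<Sigma> Qc Po Pm
    using assms by unfold_locales blast+
  from 1 show ?case
    using ex_nfa_iso[OF assms(1)] by blast
next
  case 2
  then show ?case
    using nfa_iso_imp_ULF_finitary by blast
qed

end
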